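(* Let $(X,\tau)$ be a fuzzifying topological space such that $\tau_P(A\cap B)\ge\min(\tau_P(A),\tau_P(B))$ for all $A,B\subseteq X$. Then $\max\big(0,T_2^P(X,\tau)+\Gamma_P(X,\tau)-1\big)\le T_4^P(X,\tau)$, i.e. $\vDash T_2^P(X,\tau)\otimes\Gamma_P(X,\tau)\to T_4^P(X,\tau)$.
   Context: A fuzzifying topology on $X$ is $\tau:P(X)\to[0,1]$ with $\tau(X)=1$, $\tau(A\cap B)\ge\min(\tau(A),\tau(B))$, $\tau(\bigcup A_\lambda)\ge\inf\tau(A_\lambda)$. $N_x(A)=\sup_{x\in B\subseteq A}\tau(B)$; $Cl(A)(x)=1-N_x(X\setminus A)$; for $\mu:X\to[0,1]$, $Int(\mu)(x)=\sup_{x\in B}\min(\tau(B),\inf_{y\in B}\mu(y))$; pre-open degrees $\tau_P(A)=\inf_{x\in A}Int(Cl(A))(x)$; $N^P_x(A)=\sup_{x\in B\subseteq A}\tau_P(B)$. $T_2^P(X,\tau)=\inf_{x\ne y}\sup\{\min(N^P_x(U),N^P_y(V)):U\cap V=\emptyset\}$. Pre-normality: $T_4^P(X,\tau)=\inf_{A,B\subseteq X,A\cap B=\emptyset}\min\big(1,1-\min(\tau_P(X\setminus A),\tau_P(X\setminus B))+\sup\{\min(\tau_P(U),\tau_P(V)):U\cap V=\emptyset,A\subseteq U,B\subseteq V\}\big)$. Strong compactness: with $K(\Re,X)=\inf_{x\in X}\sup_{B\ni x}\Re(B)$, $[\Re\subseteq\tau_P]=\inf_B\min(1,1-\Re(B)+\tau_P(B))$,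 $\wp\le\Re$ pointwise, $FF(\wp)=1-\inf\{\delta\in[0,1]:\{B:\wp(B)>\delta\}\text{ finite}\}$, $\Gamma_P(X,\tau)=\inf_{\Re}\min\big(1,1-\max(0,K(\Re,X)+[\Re\subseteq\tau_P]-1)+\sup_{\wp\le\Re}\max(0,K(\wp,X)+FF(\wp)-1)\big)$, inf/sup over fuzzy families $\Re,\wp:P(X)\to[0,1]$. *)

theory Defs
  imports Main "HOL.Real"
begin

text \<open>The carrier X of the fuzzifying topology is the universe of the type 'a.
  Degrees are reals in [0,1]; sup/inf are taken in [0,1], so the empty sup is 0
  and the empty inf is 1.\<close>

definition sup01 :: "real set \<Rightarrow> real" where
  "sup01 S = (if S = {} then 0 else Sup S)"

definition inf01 :: "real set \<Rightarrow> real" where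
  "inf01 S = (if S = {} then 1 else Inf S)"

definition fuzzifying_topology :: "('a set \<Rightarrow> real) \<Rightarrow> bool" where
  "fuzzifying_topology \<tau> \<longleftrightarrow>
     (\<forall>A. 0 \<le> \<tau> A \<and> \<tau> A \<le> 1) \<and>
     \<tau> UNIV = 1 \<and>
     (\<forall>A B. \<tau> (A \<inter> B) \<ge> min (\<tau> A) (\<tau> B)) \<and>
     (\<forall>\<A>. \<tau> (\<Union>\<A>) \<ge> inf01 (\<tau> ` \<A>))"

definition nbhd :: "('a set \<Rightarrow> real) \<Rightarrow> 'a \<Rightarrow> 'a set \<Rightarrow> real" where
  "nbhd \<tau> x A = sup01 {\<tau> B | B. x \<in> B \<and> B \<subseteq> A}"

definition fcl :: "('a set \<Rightarrow> real) \<Rightarrow> 'a set \<Rightarrow> 'a \<Rightarrow> real" where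
  "fcl \<tau> A x = 1 - nbhd \<tau> x (- A)"

definition fint :: "('a set \<Rightarrow> real) \<Rightarrow> ('a \<Rightarrow> real) \<Rightarrow> 'a \<Rightarrow> real" where
  "fint \<tau> \<mu> x = sup01 {min (\<tau> B) (inf01 (\<mu> ` B)) | B. x \<in> B}"

definition preopen :: "('a set \<Rightarrow> real) \<Rightarrow> 'a set \<Rightarrow> real" where
  "preopen \<tau> A = inf01 ((\<lambda>x. fint \<tau> (fcl \<tau> A) x) ` A)"

definition pre_nbhd :: "('a set \<Rightarrow> real) \<Rightarrow> 'a \<Rightarrow> 'a set \<Rightarrow> real" where
  "pre_nbhd \<tau> x A = sup01 {preopen \<tau> B | B. x \<in> B \<and> B \<subseteq> A}"

definition T2P :: "('a set \<Rightarrow> real) \<Rightarrow> real" where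
  "T2P \<tau> = inf01 {sup01 {min (pre_nbhd \<tau> x U) (pre_nbhd \<tau> y V) | U V. U \<inter> V = {}}
                    | x y. x \<noteq> y}"

definition T4P :: "('a set \<Rightarrow> real) \<Rightarrow> real" where
  "T4P \<tau> = inf01 {min 1 (1 - min (preopen \<tau> (- A)) (preopen \<tau> (- B))
                   + sup01 {min (preopen \<tau> U) (preopen \<tau> V) | U V.
                             U \<inter> V = {} \<and> A \<subseteq> U \<and> B \<subseteq> V})
                 | A B. A \<inter> B = {}}"

definition fuzzy_family :: "('a set \<Rightarrow> real) \<Rightarrow> bool" where
  "fuzzy_family R \<longleftrightarrow> (\<forall>B. 0 \<le> R B \<and> R B \<le> 1)"

definition Kdeg :: "('a set \<Rightarrow> real) \<Rightarrow> real" where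
  "Kdeg R = inf01 ((\<lambda>x. sup01 {R B | B. x \<in> B}) ` UNIV)"

definition subdeg_P :: "('a set \<Rightarrow> real) \<Rightarrow> ('a set \<Rightarrow> real) \<Rightarrow> real" where
  "subdeg_P \<tau> R = inf01 {min 1 (1 - R B + preopen \<tau> B) | B. True}"

definition FF :: "('a set \<Rightarrow> real) \<Rightarrow> real" where
  "FF p = 1 - inf01 {\<delta>. 0 \<le> \<delta> \<and> \<delta> \<le> 1 \<and> finite {B. p B > \<delta>}}"

definition GammaP :: "('a set \<Rightarrow> real) \<Rightarrow> real" where
  "GammaP \<tau> = inf01 {min 1 (1 - max 0 (Kdeg R + subdeg_P \<tau> R - 1)
                    + sup01 {max 0 (Kdeg p + FF p - 1) | p. fuzzy_family p \<and> (\<forall>B. p B \<le> R B)})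
                  | R. fuzzy_family R}"

end

theory Submission
  imports Defs
begin

text \<open>
  For a point x of A, the
  pre-open sets that are T2-separated from x, together with the complement of B, cover X;
  compactness extracts finitely many of them covering B, and their union and the intersection
  of the matching neighbourhoods of x separate x from B. These neighbourhoods of the points
  of A, together with the complement of A, cover X again, and a second use of compactness
  separates A from B. Pre-open degrees survive arbitrary unions by definition and finite
  intersections by hypothesis; finiteness is exactly what compactness provides.
\<close>

lemma sup01_upper: "s \<in> S \<Longrightarrow> (\<And>x. x \<in> S \<Longrightarrow> x \<le> b) \<Longrightarrow> s \<le> sup01 S"
  unfolding sup01_def by (auto intro!: cSup_upper bdd_aboveI)

lemma sup01_least: "(\<And>x. x \<in> S \<Longrightarrow> x \<le> b) \<Longrightarrow> 0 \<le> b \<Longrightarrow> sup01 S \<le> b"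
  unfolding sup01_def by (auto intro!: cSup_least)

lemma sup01_nonneg: "0 \<le> sup01 S" if "\<And>x. x \<in> S \<Longrightarrow> 0 \<le> x \<and> x \<le> b"
proof (cases "S = {}")
  case False
  then obtain s where "s \<in> S" by auto
  then show ?thesis using that sup01_upper[of s S b] by force
qed (simp add: sup01_def)

lemma less_sup01D:
  assumes "c < sup01 S" "0 \<le> c" "\<And>x. x \<in> S \<Longrightarrow> x \<le> b"
  shows "\<exists>x\<in>S. c < x"
proof -
  have "S \<noteq> {}" using assms(1,2) by (auto simp: sup01_def)
  moreover have "bdd_above S" using assms(3) by (auto intro!: bdd_aboveI)
  ultimately show ?thesis using assms(1) less_cSup_iff by (auto simp: sup01_def)
qed

lemma inf01_lower: "s \<in> S \<Longrightarrow> (\<And>x. x \<in> S \<Longrightarrow> b \<le> x) \<Longrightarrow> inf01 S \<le> s"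
  unfolding inf01_def by (auto intro!: cInf_lower bdd_belowI)

lemma inf01_greatest: "(\<And>x. x \<in> S \<Longrightarrow> c \<le> x) \<Longrightarrow> c \<le> 1 \<Longrightarrow> c \<le> inf01 S"
  unfolding inf01_def by (auto intro!: cInf_greatest)

lemma inf01_le_one: "inf01 S \<le> 1" if "\<And>x. x \<in> S \<Longrightarrow> b \<le> x \<and> x \<le> 1"
proof (cases "S = {}")
  case False
  then obtain s where "s \<in> S" by auto
  then show ?thesis using that inf01_lower[of s S b] by force
qed (simp add: inf01_def)

lemma inf01_lessD:
  assumes "inf01 S < c" "c \<le> 1" "\<And>x. x \<in> S \<Longrightarrow> b \<le> x"
  shows "\<exists>x\<in>S. x < c"
proof -
  have "S \<noteq> {}" using assms(1,2) by (auto simp: inf01_def)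
  moreover have "bdd_below S" using assms(3) by (auto intro!: bdd_belowI)
  ultimately show ?thesis using assms(1) cInf_less_iff by (auto simp: inf01_def)
qed

lemma sup01_unit: "(\<And>x. x \<in> S \<Longrightarrow> 0 \<le> x \<and> x \<le> 1) \<Longrightarrow> 0 \<le> sup01 S \<and> sup01 S \<le> 1"
  using sup01_nonneg[of S 1] sup01_least[of S 1] by auto

lemma inf01_unit: "(\<And>x. x \<in> S \<Longrightarrow> 0 \<le> x \<and> x \<le> 1) \<Longrightarrow> 0 \<le> inf01 S \<and> inf01 S \<le> 1"
  using inf01_greatest[of S 0] inf01_le_one[of S 0] by auto

lemma inf01_image_unit: "(\<And>y. 0 \<le> \<mu> y \<and> \<mu> y \<le> 1) \<Longrightarrow> 0 \<le> inf01 (\<mu> ` B) \<and> inf01 (\<mu> ` B) \<le> 1"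
  by (rule inf01_unit) auto

lemma Kdeg_unit: "fuzzy_family p \<Longrightarrow> 0 \<le> Kdeg p \<and> Kdeg p \<le> 1"
  unfolding Kdeg_def fuzzy_family_def
  by (intro inf01_unit) (use sup01_unit[of "{p B | B. _ \<in> B}"] in auto)

lemma Kdeg_le_sup01: "fuzzy_family p \<Longrightarrow> Kdeg p \<le> sup01 {p B | B. x \<in> B}"
  unfolding Kdeg_def fuzzy_family_def
  by (rule inf01_lower[where b=0]) (auto intro!: sup01_nonneg[where b=1])

lemma Kdeg_greatest:
  assumes "fuzzy_family R" "\<And>x. \<exists>W. x \<in> W \<and> k \<le> R W"
  shows "k \<le> Kdeg R"
  unfolding Kdeg_def
proof (rule inf01_greatest, clarify)
  fix x
  obtain W where "x \<in> W" "k \<le> R W" using assms(2) by blast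
  moreover have "R W \<le> sup01 {R B | B. x \<in> B}"
    using assms(1) \<open>x \<in> W\<close> unfolding fuzzy_family_def by (intro sup01_upper[where b=1]) auto
  ultimately show "k \<le> sup01 {R B | B. x \<in> B}" by linarith
next
  obtain W where "k \<le> R W" using assms(2) by blast
  then show "k \<le> 1" using assms(1) unfolding fuzzy_family_def by (meson order_trans)
qed

lemma FF_unit: "0 \<le> FF p \<and> FF p \<le> 1"
  using inf01_unit[of "{\<delta>. 0 \<le> \<delta> \<and> \<delta> \<le> 1 \<and> finite {B. p B > \<delta>}}"] unfolding FF_def by auto

lemma FF_finite_cover:
  assumes p: "fuzzy_family p" and "0 \<le> c" "c < Kdeg p + FF p - 1"
  shows "\<exists>F. finite F \<and> \<Union>F = UNIV \<and> (\<forall>W\<in>F. c < p W)"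
proof -
  let ?D = "{\<delta>. 0 \<le> \<delta> \<and> \<delta> \<le> 1 \<and> finite {B. p B > \<delta>}}"
  have "inf01 ?D < Kdeg p - c" using assms(3) unfolding FF_def by simp
  moreover have "Kdeg p - c \<le> 1" using Kdeg_unit[OF p] \<open>0 \<le> c\<close> by simp
  ultimately obtain \<delta> where \<delta>: "0 \<le> \<delta>" "finite {B. p B > \<delta>}" "\<delta> < Kdeg p - c"
    using inf01_lessD[where b=0, of ?D] by blast
  define F where "F = {B. \<delta> + c < p B}"
  have "finite F"
    unfolding F_def using \<delta>(2) by (rule rev_finite_subset) (use \<open>0 \<le> c\<close> in auto)
  moreover have "x \<in> \<Union>F" for x
  proof -
    have "\<delta> + c < sup01 {p B | B. x \<in> B}" using Kdeg_le_sup01[OF p, of x] \<delta>(3) by simp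
    moreover have "0 \<le> \<delta> + c" using \<delta>(1) \<open>0 \<le> c\<close> by simp
    ultimately obtain B where "x \<in> B" "\<delta> + c < p B"
      using less_sup01D[where b=1, of "\<delta> + c" "{p B | B. x \<in> B}"] p
      unfolding fuzzy_family_def by blast
    then show ?thesis unfolding F_def by auto
  qed
  moreover have "c < p W" if "W \<in> F" for W
    using that \<delta>(1) unfolding F_def by simp
  ultimately show ?thesis by blast
qed

lemma Kdeg_FF_term_unit: "fuzzy_family p \<Longrightarrow> 0 \<le> max 0 (Kdeg p + FF p - 1) \<and> max 0 (Kdeg p + FF p - 1) \<le> 1"
  using Kdeg_unit[of p] FF_unit[of p] by auto

lemma Kdeg_FF_sup01_unit:
  "0 \<le> sup01 {max 0 (Kdeg p + FF p - 1) | p. fuzzy_family p \<and> (\<forall>B. p B \<le> R B)} \<and>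
   sup01 {max 0 (Kdeg p + FF p - 1) | p. fuzzy_family p \<and> (\<forall>B. p B \<le> R B)} \<le> 1"
  using Kdeg_FF_term_unit by (intro sup01_unit) blast

lemma subdeg_P_eq_one: "(\<And>W. R W \<le> preopen \<tau> W) \<Longrightarrow> subdeg_P \<tau> R = 1"
proof -
  assume "\<And>W. R W \<le> preopen \<tau> W"
  then have "{min 1 (1 - R B + preopen \<tau> B) | B. True} = {1}" by (auto simp: min_def)
  then show ?thesis unfolding subdeg_P_def inf01_def by simp
qed

context
  fixes \<tau> :: "'a set \<Rightarrow> real"
  assumes ft: "fuzzifying_topology \<tau>"
begin

lemma fuzzifying_topology_unit: "0 \<le> \<tau> A \<and> \<tau> A \<le> 1"
  using ft unfolding fuzzifying_topology_def by auto

lemma fuzzifying_topology_UNIV: "\<tau> UNIV = 1"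
  using ft unfolding fuzzifying_topology_def by auto

lemma nbhd_unit: "0 \<le> nbhd \<tau> x A \<and> nbhd \<tau> x A \<le> 1"
  unfolding nbhd_def by (rule sup01_unit) (auto simp: fuzzifying_topology_unit)

lemma fcl_unit: "0 \<le> fcl \<tau> A x \<and> fcl \<tau> A x \<le> 1"
  unfolding fcl_def using nbhd_unit[of x "-A"] by auto

lemma fint_unit:
  assumes "\<And>y. 0 \<le> \<mu> y \<and> \<mu> y \<le> 1"
  shows "0 \<le> fint \<tau> \<mu> x \<and> fint \<tau> \<mu> x \<le> 1"
  unfolding fint_def using inf01_image_unit[of \<mu>, OF assms]
  by (intro sup01_unit) (auto simp: fuzzifying_topology_unit min_le_iff_disj)

lemma preopen_unit: "0 \<le> preopen \<tau> A \<and> preopen \<tau> A \<le> 1"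
  unfolding preopen_def by (rule inf01_unit) (auto intro!: fint_unit fcl_unit)

lemma pre_nbhd_unit: "0 \<le> pre_nbhd \<tau> x A \<and> pre_nbhd \<tau> x A \<le> 1"
  unfolding pre_nbhd_def by (rule sup01_unit) (auto simp: preopen_unit)

lemma nbhd_mono: "A \<subseteq> A' \<Longrightarrow> nbhd \<tau> x A \<le> nbhd \<tau> x A'"
  unfolding nbhd_def
  by (rule sup01_least, rule sup01_upper[where b=1])
     (auto intro!: sup01_nonneg[where b=1] simp: fuzzifying_topology_unit)

lemma fcl_mono: "A \<subseteq> A' \<Longrightarrow> fcl \<tau> A x \<le> fcl \<tau> A' x"
  unfolding fcl_def using nbhd_mono[of "- A'" "- A" x] by auto

lemma fint_mono:
  assumes "\<And>y. \<mu> y \<le> \<mu>' y" "\<And>y. 0 \<le> \<mu> y \<and> \<mu> y \<le> 1" "\<And>y. 0 \<le> \<mu>' y \<and> \<mu>' y \<le> 1"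
  shows "fint \<tau> \<mu> x \<le> fint \<tau> \<mu>' x"
proof -
  have inf: "inf01 (\<mu> ` B) \<le> inf01 (\<mu>' ` B)" for B
  proof (rule inf01_greatest)
    show "inf01 (\<mu> ` B) \<le> 1" using inf01_image_unit[of \<mu>, OF assms(2)] by simp
    show "inf01 (\<mu> ` B) \<le> v" if "v \<in> \<mu>' ` B" for v
      using that assms(1,2) by (auto intro: order_trans[OF inf01_lower[where b=0]])
  qed
  have unit: "0 \<le> min (\<tau> B) (inf01 (\<mu>' ` B)) \<and> min (\<tau> B) (inf01 (\<mu>' ` B)) \<le> 1" for B
    using inf01_image_unit[of \<mu>', OF assms(3)] fuzzifying_topology_unit[of B] by auto
  let ?S' = "{min (\<tau> B) (inf01 (\<mu>' ` B)) |B. x \<in> B}"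
  show ?thesis
    unfolding fint_def
  proof (rule sup01_least, clarify)
    fix B assume "x \<in> B"
    have "min (\<tau> B) (inf01 (\<mu> ` B)) \<le> min (\<tau> B) (inf01 (\<mu>' ` B))"
      using inf by (rule min.mono[OF order_refl])
    also have "\<dots> \<le> sup01 ?S'"
      by (rule sup01_upper[where b=1]) (use \<open>x \<in> B\<close> unit in auto)
    finally show "min (\<tau> B) (inf01 (\<mu> ` B)) \<le> sup01 ?S'" .
  next
    show "0 \<le> sup01 ?S'" using unit by (intro sup01_nonneg[where b=1]) auto
  qed
qed

lemma preopen_le_fint: "x \<in> A \<Longrightarrow> preopen \<tau> A \<le> fint \<tau> (fcl \<tau> A) x"
  unfolding preopen_def using fint_unit[of "fcl \<tau> A"] fcl_unit
  by (intro inf01_lower[where b=0]) auto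

lemma preopen_Union:
  assumes "\<And>W. W \<in> F \<Longrightarrow> c \<le> preopen \<tau> W" "c \<le> 1"
  shows "c \<le> preopen \<tau> (\<Union>F)"
  unfolding preopen_def
proof (rule inf01_greatest[OF _ assms(2)], clarify)
  fix x W assume "x \<in> W" "W \<in> F"
  then have "c \<le> fint \<tau> (fcl \<tau> W) x"
    using assms(1) preopen_le_fint order_trans by blast
  also have "\<dots> \<le> fint \<tau> (fcl \<tau> (\<Union>F)) x"
    using \<open>W \<in> F\<close> by (intro fint_mono fcl_mono fcl_unit) auto
  finally show "c \<le> fint \<tau> (fcl \<tau> (\<Union>F)) x" .
qed

lemma preopen_UNIV: "preopen \<tau> UNIV = 1"
proof -
  have "fcl \<tau> UNIV = (\<lambda>_. 1)"
    unfolding fcl_def nbhd_def sup01_def by auto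
  then have "fint \<tau> (fcl \<tau> UNIV) x = 1" for x
    unfolding fint_def using fuzzifying_topology_UNIV
    by (intro antisym sup01_least sup01_upper[where b=1])
       (auto simp: inf01_def fuzzifying_topology_unit min_le_iff_disj intro!: exI[of _ UNIV])
  then show ?thesis
    unfolding preopen_def inf01_def by auto
qed

lemma preopen_Inter:
  assumes Int: "\<And>A B. preopen \<tau> (A \<inter> B) \<ge> min (preopen \<tau> A) (preopen \<tau> B)"
    and "finite F" "\<And>W. W \<in> F \<Longrightarrow> c \<le> preopen \<tau> W" "c \<le> 1"
  shows "c \<le> preopen \<tau> (\<Inter>F)"
  using assms(2,3)
proof (induction F rule: finite_induct)
  case empty
  then show ?case using preopen_UNIV assms(4) by simp
next
  case (insert W F)
  then have "c \<le> min (preopen \<tau> W) (preopen \<tau> (\<Inter>F))" by simp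
  also have "\<dots> \<le> preopen \<tau> (W \<inter> \<Inter>F)" by (rule Int)
  finally show ?case by simp
qed

lemma less_pre_nbhdD:
  assumes "0 \<le> t" "t < pre_nbhd \<tau> x A"
  obtains U where "x \<in> U" "U \<subseteq> A" "t < preopen \<tau> U"
  using less_sup01D[where b=1, OF assms(2)[unfolded pre_nbhd_def] assms(1)] preopen_unit
  by blast

lemma T2P_separation_unit:
  "0 \<le> sup01 {min (pre_nbhd \<tau> x U) (pre_nbhd \<tau> y V) | U V. U \<inter> V = {}} \<and>
   sup01 {min (pre_nbhd \<tau> x U) (pre_nbhd \<tau> y V) | U V. U \<inter> V = {}} \<le> 1"
  by (intro sup01_unit) (auto simp: pre_nbhd_unit min_le_iff_disj)

lemma T2P_unit: "0 \<le> T2P \<tau> \<and> T2P \<tau> \<le> 1"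
  unfolding T2P_def using T2P_separation_unit by (intro inf01_unit) blast

lemma less_T2P_separation:
  assumes "x \<noteq> y" "0 \<le> t" "t < T2P \<tau>"
  obtains U V where "x \<in> U" "y \<in> V" "U \<inter> V = {}" "t < preopen \<tau> U" "t < preopen \<tau> V"
proof -
  let ?S = "{min (pre_nbhd \<tau> x U) (pre_nbhd \<tau> y V) | U V. U \<inter> V = {}}"
  have "T2P \<tau> \<le> sup01 ?S"
    unfolding T2P_def using assms(1) T2P_separation_unit
    by (intro inf01_lower[where b=0]) blast+
  then have "\<exists>v\<in>?S. t < v"
    using assms(2,3) pre_nbhd_unit
    by (intro less_sup01D[where b=1]) (auto simp: min_le_iff_disj)
  then obtain U V where UV: "U \<inter> V = {}" "t < pre_nbhd \<tau> x U" "t < pre_nbhd \<tau> y V"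
    by auto
  obtain U' where "x \<in> U'" "U' \<subseteq> U" "t < preopen \<tau> U'"
    using less_pre_nbhdD[OF assms(2) UV(2)] .
  moreover obtain V' where "y \<in> V'" "V' \<subseteq> V" "t < preopen \<tau> V'"
    using less_pre_nbhdD[OF assms(2) UV(3)] .
  ultimately show ?thesis using that UV(1) by blast
qed

lemma subdeg_P_unit: "fuzzy_family R \<Longrightarrow> 0 \<le> subdeg_P \<tau> R \<and> subdeg_P \<tau> R \<le> 1"
  unfolding subdeg_P_def fuzzy_family_def
  by (rule inf01_unit) (auto simp: min_def preopen_unit intro: add_nonneg_nonneg)

lemma GammaP_term_unit:
  assumes "fuzzy_family R"
  shows "0 \<le> min 1 (1 - max 0 (Kdeg R + subdeg_P \<tau> R - 1)
            + sup01 {max 0 (Kdeg p + FF p - 1) | p. fuzzy_family p \<and> (\<forall>B. p B \<le> R B)}) \<and>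
         min 1 (1 - max 0 (Kdeg R + subdeg_P \<tau> R - 1)
            + sup01 {max 0 (Kdeg p + FF p - 1) | p. fuzzy_family p \<and> (\<forall>B. p B \<le> R B)}) \<le> 1"
  using Kdeg_unit[OF assms] subdeg_P_unit[OF assms] Kdeg_FF_sup01_unit[of R] by auto

lemma GammaP_le_one: "GammaP \<tau> \<le> 1"
  unfolding GammaP_def using GammaP_term_unit by (intro inf01_le_one[where b=0]) blast

lemma GammaP_finite_subcover:
  assumes R: "fuzzy_family R" "\<And>W. R W \<le> preopen \<tau> W"
    and cover: "\<And>x. \<exists>W. x \<in> W \<and> k \<le> R W"
    and c: "0 \<le> c" "c < GammaP \<tau> + k - 1"
  shows "\<exists>F. finite F \<and> \<Union>F = UNIV \<and> (\<forall>W\<in>F. c < R W)"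
proof -
  let ?Q = "{max 0 (Kdeg p + FF p - 1) | p. fuzzy_family p \<and> (\<forall>B. p B \<le> R B)}"
  have "GammaP \<tau> \<le> min 1 (1 - max 0 (Kdeg R + subdeg_P \<tau> R - 1) + sup01 ?Q)"
    unfolding GammaP_def using R(1) GammaP_term_unit by (intro inf01_lower[where b=0]) blast+
  then have "GammaP \<tau> \<le> 1 - Kdeg R + sup01 ?Q"
    using subdeg_P_eq_one[OF R(2)] Kdeg_unit[OF R(1)] by simp
  then have "c < sup01 ?Q" using c(2) Kdeg_greatest[OF R(1) cover] by simp
  then have "\<exists>v\<in>?Q. c < v" using c(1) Kdeg_FF_term_unit by (intro less_sup01D[where b=1]) blast+
  then obtain p where p: "fuzzy_family p" "\<And>B. p B \<le> R B" "c < Kdeg p + FF p - 1"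
    using c(1) by auto
  obtain F where "finite F" "\<Union>F = UNIV" "\<forall>W\<in>F. c < p W"
    using FF_finite_cover[OF p(1) c(1) p(3)] by blast
  moreover have "c < R W" if "c < p W" for W using that p(2)[of W] by simp
  ultimately show ?thesis by blast
qed

lemma preopen_finite_subcover:
  assumes c: "0 \<le> c" "c < GammaP \<tau> + k - 1"
    and "k \<le> preopen \<tau> (- S)" "\<And>y. y \<in> S \<Longrightarrow> \<exists>W. y \<in> W \<and> P W \<and> k \<le> preopen \<tau> W"
  obtains G where "finite G" "S \<subseteq> \<Union>G" "\<And>W. W \<in> G \<Longrightarrow> P W \<and> c < preopen \<tau> W"
proof -
  define R where "R W = (if P W \<or> W = - S then preopen \<tau> W else 0)" for W
  have "fuzzy_family R" unfolding fuzzy_family_def R_def using preopen_unit by auto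
  moreover have "R W \<le> preopen \<tau> W" for W unfolding R_def using preopen_unit by auto
  moreover have "\<exists>W. x \<in> W \<and> k \<le> R W" for x
    using assms(3) assms(4)[of x] by (cases "x \<in> S") (auto simp: R_def)
  ultimately have "\<exists>F. finite F \<and> \<Union>F = UNIV \<and> (\<forall>W\<in>F. c < R W)"
    using c by (rule GammaP_finite_subcover)
  then obtain F where F: "finite F" "\<Union>F = UNIV" "\<And>W. W \<in> F \<Longrightarrow> c < R W"
    by blast
  define G where "G = {W \<in> F. W \<inter> S \<noteq> {}}"
  have "P W \<and> c < preopen \<tau> W" if "W \<in> G" for W
  proof -
    have "W \<noteq> - S" "c < R W" using that F(3) unfolding G_def by auto
    then show ?thesis using c(1) unfolding R_def by (auto split: if_splits)
  qed
  moreover have "S \<subseteq> \<Union>G" using F(2) unfolding G_def by blast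
  moreover have "finite G" using F(1) unfolding G_def by simp
  ultimately show ?thesis using that by blast
qed

lemma preopen_separation_from_pointwise:
  assumes Int: "\<And>A B. preopen \<tau> (A \<inter> B) \<ge> min (preopen \<tau> A) (preopen \<tau> B)"
    and c: "0 \<le> c" "c < GammaP \<tau> + k - 1"
    and k: "k \<le> preopen \<tau> (- S)" and d: "d \<le> 1"
    and pointwise: "\<And>y. y \<in> S \<Longrightarrow>
      \<exists>W V. y \<in> W \<and> T \<subseteq> V \<and> W \<inter> V = {} \<and> k \<le> preopen \<tau> W \<and> d \<le> preopen \<tau> V"
  obtains U V where "S \<subseteq> U" "T \<subseteq> V" "U \<inter> V = {}" "c \<le> preopen \<tau> U" "d \<le> preopen \<tau> V"
proof -
  let ?P = "\<lambda>W. \<exists>V. T \<subseteq> V \<and> W \<inter> V = {} \<and> d \<le> preopen \<tau> V"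
  have cover: "\<exists>W. y \<in> W \<and> ?P W \<and> k \<le> preopen \<tau> W" if "y \<in> S" for y
    using pointwise[OF that] by blast
  obtain G where G: "finite G" "S \<subseteq> \<Union>G" "\<And>W. W \<in> G \<Longrightarrow> ?P W \<and> c < preopen \<tau> W"
    using preopen_finite_subcover[of c k S ?P, OF c k cover] by blast
  then have "\<forall>W\<in>G. ?P W" by blast
  then obtain Vf where Vf: "\<forall>W\<in>G. T \<subseteq> Vf W \<and> W \<inter> Vf W = {} \<and> d \<le> preopen \<tau> (Vf W)"
    by (metis (no_types, lifting))
  have "c \<le> 1" using c(2) k GammaP_le_one preopen_unit[of "- S"] by linarith
  show thesis
  proof (rule that[of "\<Union>G" "\<Inter>(Vf ` G)"])
    show "S \<subseteq> \<Union>G" by (fact G(2))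
    show "T \<subseteq> \<Inter>(Vf ` G)" "\<Union>G \<inter> \<Inter>(Vf ` G) = {}" using Vf by blast+
    show "c \<le> preopen \<tau> (\<Union>G)"
      using G(3) \<open>c \<le> 1\<close> by (intro preopen_Union) (auto intro: less_imp_le)
    show "d \<le> preopen \<tau> (\<Inter>(Vf ` G))"
      using G(1) Vf d by (intro preopen_Inter[OF Int]) auto
  qed
qed

lemma point_set_separation:
  assumes Int: "\<And>A B. preopen \<tau> (A \<inter> B) \<ge> min (preopen \<tau> A) (preopen \<tau> B)"
    and "x \<notin> B" and c: "0 \<le> c" "c < GammaP \<tau> + k - 1"
    and t: "0 \<le> t" "t < T2P \<tau>" and k: "k \<le> t" "k \<le> preopen \<tau> (- B)"
  obtains U V where "x \<in> U" "B \<subseteq> V" "U \<inter> V = {}" "k \<le> preopen \<tau> U" "c \<le> preopen \<tau> V"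
proof -
  have pointwise: "\<exists>W V. y \<in> W \<and> {x} \<subseteq> V \<and> W \<inter> V = {} \<and> k \<le> preopen \<tau> W \<and> k \<le> preopen \<tau> V"
    if "y \<in> B" for y
  proof -
    have "x \<noteq> y" using \<open>x \<notin> B\<close> \<open>y \<in> B\<close> by auto
    then obtain U V where "x \<in> U" "y \<in> V" "U \<inter> V = {}" "t < preopen \<tau> U" "t < preopen \<tau> V"
      using less_T2P_separation t by metis
    then show ?thesis using k(1) by (intro exI[of _ V] exI[of _ U]) auto
  qed
  have "k \<le> 1" using k(1) t(2) T2P_unit by linarith
  from preopen_separation_from_pointwise[OF Int c k(2) this pointwise]
  obtain V U where "B \<subseteq> V" "{x} \<subseteq> U" "V \<inter> U = {}" "c \<le> preopen \<tau> V" "k \<le> preopen \<tau> U" .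
  then show thesis by (intro that[of U V]) auto
qed

lemma T2P_GammaP_separation_degree:
  assumes Int: "\<And>A B. preopen \<tau> (A \<inter> B) \<ge> min (preopen \<tau> A) (preopen \<tau> B)"
    and AB: "A \<inter> B = {}"
  shows "GammaP \<tau> + min (T2P \<tau>) (min (preopen \<tau> (- A)) (preopen \<tau> (- B))) - 1
    \<le> sup01 {min (preopen \<tau> U) (preopen \<tau> V) | U V. U \<inter> V = {} \<and> A \<subseteq> U \<and> B \<subseteq> V}"
    (is "?g + min ?t ?m - 1 \<le> sup01 ?S")
proof (rule dense_le)
  have S_unit: "0 \<le> v \<and> v \<le> 1" if "v \<in> ?S" for v
    using that preopen_unit by (auto simp: min_le_iff_disj)
  fix c assume c: "c < ?g + min ?t ?m - 1"
  show "c \<le> sup01 ?S"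
  proof (cases "0 \<le> c")
    case False
    have "0 \<le> sup01 ?S" by (rule sup01_nonneg[where b=1]) (rule S_unit)
    then show ?thesis using False by linarith
  next
    case True
    have unit: "?g \<le> 1" "?t \<le> 1" "0 \<le> ?t" "?m \<le> 1"
      using GammaP_le_one T2P_unit preopen_unit[of "- A"] by auto
    text \<open>T2P only separates at levels strictly below it, hence the intermediate level t'.\<close>
    define t' where "t' = (c + 1 - ?g + ?t) / 2"
    define k where "k = min t' ?m"
    have "c + 1 - ?g < ?t" "c + 1 - ?g < ?m" using c by auto
    then have t': "0 \<le> t'" "t' < ?t" "c + 1 - ?g < t'"
      using True unit unfolding t'_def by auto
    have k: "c < ?g + k - 1" "k \<le> t'" "k \<le> preopen \<tau> (- A)" "k \<le> preopen \<tau> (- B)" "k \<le> 1"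
      using t'(3) \<open>c + 1 - ?g < ?m\<close> unit unfolding k_def by auto
    have point_set: "\<exists>U V. x \<in> U \<and> B \<subseteq> V \<and> U \<inter> V = {} \<and> k \<le> preopen \<tau> U \<and> c \<le> preopen \<tau> V"
      if "x \<in> A" for x
    proof -
      have "x \<notin> B" using that AB by auto
      from point_set_separation[OF Int this True k(1) t'(1,2) k(2,4)]
      obtain U V where "x \<in> U" "B \<subseteq> V" "U \<inter> V = {}" "k \<le> preopen \<tau> U" "c \<le> preopen \<tau> V" .
      then show ?thesis by blast
    qed
    have "c \<le> 1" using k(1,5) unit by linarith
    from preopen_separation_from_pointwise[OF Int True k(1) k(3) this point_set]
    obtain U V where UV: "A \<subseteq> U" "B \<subseteq> V" "U \<inter> V = {}" "c \<le> preopen \<tau> U" "c \<le> preopen \<tau> V" .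
    then have "min (preopen \<tau> U) (preopen \<tau> V) \<in> ?S" by blast
    with UV(4,5) S_unit show ?thesis by (meson min.boundedI order_trans sup01_upper)
  qed
qed

end

theorem lemma3p4:
  fixes \<tau> :: "'a set \<Rightarrow> real"
  assumes "fuzzifying_topology \<tau>"
    and "\<forall>A B. preopen \<tau> (A \<inter> B) \<ge> min (preopen \<tau> A) (preopen \<tau> B)"
  shows "max 0 (T2P \<tau> + GammaP \<tau> - 1) \<le> T4P \<tau>"
  unfolding T4P_def
proof (rule inf01_greatest, clarify)
  note unit = T2P_unit[OF assms(1)] GammaP_le_one[OF assms(1)] preopen_unit[OF assms(1)]
  fix A B :: "'a set" assume "A \<inter> B = {}"
  let ?m = "min (preopen \<tau> (- A)) (preopen \<tau> (- B))"
  let ?S = "{min (preopen \<tau> U) (preopen \<tau> V) | U V. U \<inter> V = {} \<and> A \<subseteq> U \<and> B \<subseteq> V}"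
  have "max 0 (t + g - 1) \<le> min 1 (1 - m + s)"
    if "t \<le> 1" "g \<le> 1" "m \<le> 1" "0 \<le> s" "g + min t m - 1 \<le> s" for t g m s :: real
    using that by (auto simp: min_def max_def split: if_split_asm)
  moreover have "GammaP \<tau> + min (T2P \<tau>) ?m - 1 \<le> sup01 ?S"
    using T2P_GammaP_separation_degree[OF assms(1)] assms(2) \<open>A \<inter> B = {}\<close> by blast
  moreover have "0 \<le> sup01 ?S"
    using unit by (intro sup01_nonneg[where b=1]) (auto simp: min_le_iff_disj)
  moreover have "?m \<le> 1" using unit by (simp add: min_le_iff_disj)
  ultimately show "max 0 (T2P \<tau> + GammaP \<tau> - 1) \<le> min 1 (1 - ?m + sup01 ?S)"
    using unit by blast
next
  show "max 0 (T2P \<tau> + GammaP \<tau> - 1) \<le> 1"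
    using T2P_unit[OF assms(1)] GammaP_le_one[OF assms(1)] by simp
qed

end
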